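(* Let $G=(V,E,s_0,s_1)$ be a switch graph and $o,d\in V$ with $o\neq d$. Then $\textsc{Run}(G,o,d)$ terminates if and only if there exists an integral solution $\mathbf{x}\in\mathbb{N}_0^E$ satisfying, for all $v\in V$, (a) $\sum_{e\in E^+(v)}x_e-\sum_{e\in E^-(v)}x_e$ equals $1$ if $v=o$, $-1$ if $v=d$, and $0$ otherwise, and (b) $0\le x_{(v,s_1(v))}\le x_{(v,s_0(v))}\le x_{(v,s_1(v))}+1$. In this case, the run profile $\mathbf{x}(G,o,d)$ is the unique integral solution that minimizes $\Sigma(\mathbf{x})=\sum_{e\in E}x_e$ subject to constraints (a) and (b).
   Context: A switch graph is a 4-tuple $G=(V,E,s_0,s_1)$ where $V$ is a finite vertex set, $s_0,s_1:V\to V$, and $E=\{(v,s_0(v)):v\in V\}\cup\{(v,s_1(v)):v\in V\}$ (loops allowed; possibly $s_0(v)=s_1(v)$). For $v\in V$, $E^+(v)$ and $E^-(v)$ denote the outgoing and incoming edges of $v$. The procedure $\textsc{Run}(G,o,d)$: maintain arrays $\mathtt{s\_curr},\mathtt{s\_next}$ indexed by $V$, initially $\mathtt{s\_curr}[v]=s_0(v)$, $\mathtt{s\_next}[v]=s_1(v)$; set $v:=o$; while $v\neq d$: $w:=\mathtt{s\_curr}[v]$, swap $\mathtt{s\_curr}[v],\mathtt{s\_next}[v]$, $v:=w$ (traversing edge $(v,w)$). When the run terminates, its run profile $\mathbf{x}(G,o,d):E\to\mathbb{N}_0$ assigns to each edge the number of times it was traversed. *)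

theory Defs
  imports Main
begin

text \<open>Switch graph on the finite vertex type 'v (V = UNIV), given by s0, s1 :: 'v => 'v.
  Edges are pairs (v,w); the edge set is E = {(v, s0 v)} \<union> {(v, s1 v)}.\<close>

definition sw_edges :: "('v \<Rightarrow> 'v) \<Rightarrow> ('v \<Rightarrow> 'v) \<Rightarrow> ('v \<times> 'v) set" where
  "sw_edges s0 s1 = {(v, s0 v) | v. True} \<union> {(v, s1 v) | v. True}"

definition out_edges :: "('v \<Rightarrow> 'v) \<Rightarrow> ('v \<Rightarrow> 'v) \<Rightarrow> 'v \<Rightarrow> ('v \<times> 'v) set" where
  "out_edges s0 s1 v = {e \<in> sw_edges s0 s1. fst e = v}"

definition in_edges :: "('v \<Rightarrow> 'v) \<Rightarrow> ('v \<Rightarrow> 'v) \<Rightarrow> 'v \<Rightarrow> ('v \<times> 'v) set" where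
  "in_edges s0 s1 v = {e \<in> sw_edges s0 s1. snd e = v}"

definition run_step :: "'v \<times> ('v \<Rightarrow> 'v) \<times> ('v \<Rightarrow> 'v) \<Rightarrow> 'v \<times> ('v \<Rightarrow> 'v) \<times> ('v \<Rightarrow> 'v)" where
  "run_step st = (case st of (v, cur, nxt) \<Rightarrow> (cur v, cur(v := nxt v), nxt(v := cur v)))"

definition run_state :: "('v \<Rightarrow> 'v) \<Rightarrow> ('v \<Rightarrow> 'v) \<Rightarrow> 'v \<Rightarrow> nat \<Rightarrow> 'v \<times> ('v \<Rightarrow> 'v) \<times> ('v \<Rightarrow> 'v)" where
  "run_state s0 s1 a k = (run_step ^^ k) (a, s0, s1)"

definition run_pos :: "('v \<Rightarrow> 'v) \<Rightarrow> ('v \<Rightarrow> 'v) \<Rightarrow> 'v \<Rightarrow> nat \<Rightarrow> 'v" where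
  "run_pos s0 s1 a k = fst (run_state s0 s1 a k)"

definition run_terminates :: "('v \<Rightarrow> 'v) \<Rightarrow> ('v \<Rightarrow> 'v) \<Rightarrow> 'v \<Rightarrow> 'v \<Rightarrow> bool" where
  "run_terminates s0 s1 a d = (\<exists>k. run_pos s0 s1 a k = d)"

definition run_length :: "('v \<Rightarrow> 'v) \<Rightarrow> ('v \<Rightarrow> 'v) \<Rightarrow> 'v \<Rightarrow> 'v \<Rightarrow> nat" where
  "run_length s0 s1 a d = (LEAST k. run_pos s0 s1 a k = d)"

definition run_profile :: "('v \<Rightarrow> 'v) \<Rightarrow> ('v \<Rightarrow> 'v) \<Rightarrow> 'v \<Rightarrow> 'v \<Rightarrow> 'v \<times> 'v \<Rightarrow> nat" where
  "run_profile s0 s1 a d e =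
     card {i. i < run_length s0 s1 a d \<and> (run_pos s0 s1 a i, run_pos s0 s1 a (Suc i)) = e}"

definition switch_feasible :: "('v \<Rightarrow> 'v) \<Rightarrow> ('v \<Rightarrow> 'v) \<Rightarrow> 'v \<Rightarrow> 'v \<Rightarrow> ('v \<times> 'v \<Rightarrow> nat) \<Rightarrow> bool" where
  "switch_feasible s0 s1 a d x \<longleftrightarrow>
     (\<forall>e. e \<notin> sw_edges s0 s1 \<longrightarrow> x e = 0) \<and>
     (\<forall>v. int (\<Sum>e\<in>out_edges s0 s1 v. x e) - int (\<Sum>e\<in>in_edges s0 s1 v. x e)
            = (if v = a then 1 else if v = d then -1 else 0)) \<and>
     (\<forall>v. x (v, s1 v) \<le> x (v, s0 v) \<and> x (v, s0 v) \<le> x (v, s1 v) + 1)"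

definition total_flow :: "('v \<Rightarrow> 'v) \<Rightarrow> ('v \<Rightarrow> 'v) \<Rightarrow> ('v \<times> 'v \<Rightarrow> nat) \<Rightarrow> nat" where
  "total_flow s0 s1 x = (\<Sum>e\<in>sw_edges s0 s1. x e)"

end

theory Submission
  imports Defs
begin

text \<open>Since the switch at v alternates, after the walk has left v exactly c times it has used
  (v, s0 v) \<lceil>c/2\<rceil> times and (v, s1 v) \<lfloor>c/2\<rfloor> times; hence every prefix of the run is a
  unit flow from o to the current vertex satisfying the switching constraints (b).
  Conversely every feasible x dominates every prefix of the run that avoids d: at the first
  step where the run would exceed x on an edge leaving p \<noteq> d, constraint (b) forces x to
  leave p at most as often as the run has, while x enters p at least as often, contradicting
  conservation at p. So the run stops within \<Sigma>(x) steps, and its profile is the componentwise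
  least feasible solution, hence the unique minimiser of \<Sigma>.\<close>

definition visits :: "('v \<Rightarrow> 'v) \<Rightarrow> ('v \<Rightarrow> 'v) \<Rightarrow> 'v \<Rightarrow> nat \<Rightarrow> 'v \<Rightarrow> nat" where
  "visits s0 s1 a n v = card {i. i < n \<and> run_pos s0 s1 a i = v}"

definition traversals :: "('v \<Rightarrow> 'v) \<Rightarrow> ('v \<Rightarrow> 'v) \<Rightarrow> 'v \<Rightarrow> nat \<Rightarrow> 'v \<times> 'v \<Rightarrow> nat" where
  "traversals s0 s1 a n e = card {i. i < n \<and> (run_pos s0 s1 a i, run_pos s0 s1 a (Suc i)) = e}"

lemma card_less_Suc_conj:
  "card {i. i < Suc n \<and> P i} = card {i. i < n \<and> P i} + (if P n then 1 else 0)"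
proof -
  have "{i. i < Suc n \<and> P i} = (if P n then insert n else id) {i. i < n \<and> P i}"
    by (auto simp: less_Suc_eq)
  then show ?thesis by simp
qed

lemma visits_0 [simp]: "visits s0 s1 a 0 v = 0"
  by (simp add: visits_def)

lemma visits_Suc:
  "visits s0 s1 a (Suc n) v = visits s0 s1 a n v + (if run_pos s0 s1 a n = v then 1 else 0)"
  unfolding visits_def by (rule card_less_Suc_conj)

lemma traversals_0 [simp]: "traversals s0 s1 a 0 e = 0"
  by (simp add: traversals_def)

lemma traversals_Suc:
  "traversals s0 s1 a (Suc n) e = traversals s0 s1 a n e +
     (if (run_pos s0 s1 a n, run_pos s0 s1 a (Suc n)) = e then 1 else 0)"
  unfolding traversals_def by (rule card_less_Suc_conj)

lemma run_profile_eq_traversals: "run_profile s0 s1 a d = traversals s0 s1 a (run_length s0 s1 a d)"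
  by (rule ext) (simp only: run_profile_def traversals_def)

lemma run_pos_0 [simp]: "run_pos s0 s1 a 0 = a"
  by (simp add: run_pos_def run_state_def)

lemma run_state_eq_parity:
  "run_state s0 s1 a n = (run_pos s0 s1 a n,
     (\<lambda>v. if even (visits s0 s1 a n v) then s0 v else s1 v),
     (\<lambda>v. if even (visits s0 s1 a n v) then s1 v else s0 v))"
proof (induction n)
  case 0
  then show ?case by (simp add: run_state_def run_pos_def)
next
  case (Suc n)
  have "run_state s0 s1 a (Suc n) = run_step (run_state s0 s1 a n)"
    "run_pos s0 s1 a (Suc n) = fst (run_step (run_state s0 s1 a n))"
    by (simp_all add: run_state_def run_pos_def)
  then show ?case
    unfolding Suc.IH by (auto simp: run_step_def visits_Suc fun_eq_iff)
qed

lemma run_pos_Suc: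
  "run_pos s0 s1 a (Suc n) =
     (if even (visits s0 s1 a n (run_pos s0 s1 a n))
      then s0 (run_pos s0 s1 a n) else s1 (run_pos s0 s1 a n))"
proof -
  have "run_pos s0 s1 a (Suc n) = fst (run_step (run_state s0 s1 a n))"
    by (simp add: run_state_def run_pos_def)
  then show ?thesis
    unfolding run_state_eq_parity by (simp add: run_step_def)
qed

lemma run_edge_in_sw_edges: "(run_pos s0 s1 a n, run_pos s0 s1 a (Suc n)) \<in> sw_edges s0 s1"
  by (subst run_pos_Suc) (auto simp: sw_edges_def)

lemma traversals_eq_0_if_not_edge: "e \<notin> sw_edges s0 s1 \<Longrightarrow> traversals s0 s1 a n e = 0"
  using run_edge_in_sw_edges unfolding traversals_def by fastforce

lemma sum_traversals:
  fixes s0 s1 :: "'v::finite \<Rightarrow> 'v"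
  shows "(\<Sum>e\<in>sw_edges s0 s1. traversals s0 s1 a n e) = n"
  by (induction n) (simp_all add: traversals_Suc sum.distrib run_edge_in_sw_edges)

lemma out_edges_eq: "out_edges s0 s1 v = {(v, s0 v), (v, s1 v)}"
  by (auto simp: out_edges_def sw_edges_def)

lemma traversals_out_edges_alternate:
  assumes "s0 v \<noteq> s1 v"
  shows "traversals s0 s1 a n (v, s0 v) = (visits s0 s1 a n v + 1) div 2 \<and>
         traversals s0 s1 a n (v, s1 v) = visits s0 s1 a n v div 2"
proof (induction n)
  case (Suc n)
  then show ?case
    using assms by (cases "run_pos s0 s1 a n = v") (auto simp: traversals_Suc visits_Suc run_pos_Suc)
qed simp

lemma traversals_out_edge_single:
  assumes "s0 v = s1 v"
  shows "traversals s0 s1 a n (v, s0 v) = visits s0 s1 a n v"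
proof (induction n)
  case (Suc n)
  then show ?case
    using assms by (cases "run_pos s0 s1 a n = v") (auto simp: traversals_Suc visits_Suc run_pos_Suc)
qed simp

lemma traversals_switching:
  "traversals s0 s1 a n (v, s1 v) \<le> traversals s0 s1 a n (v, s0 v) \<and>
   traversals s0 s1 a n (v, s0 v) \<le> traversals s0 s1 a n (v, s1 v) + 1"
  using traversals_out_edges_alternate[of s0 v s1 a n] traversals_out_edge_single[of s0 v s1 a n]
  by (cases "s0 v = s1 v") auto

lemma sum_out_edges_traversals:
  "(\<Sum>e\<in>out_edges s0 s1 v. traversals s0 s1 a n e) = visits s0 s1 a n v"
  using traversals_out_edges_alternate[of s0 v s1 a n] traversals_out_edge_single[of s0 v s1 a n]
  by (cases "s0 v = s1 v") (auto simp: out_edges_eq)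

lemma traversals_flow:
  fixes s0 s1 :: "'v::finite \<Rightarrow> 'v"
  shows "int (\<Sum>e\<in>out_edges s0 s1 v. traversals s0 s1 a n e)
           - int (\<Sum>e\<in>in_edges s0 s1 v. traversals s0 s1 a n e)
         = (if v = a then 1 else 0) - (if run_pos s0 s1 a n = v then 1 else 0)"
proof (induction n)
  case (Suc n)
  let ?p = "run_pos s0 s1 a n" and ?q = "run_pos s0 s1 a (Suc n)"
  have edge: "(?p, ?q) \<in> sw_edges s0 s1"
    by (rule run_edge_in_sw_edges)
  have "(\<Sum>e\<in>out_edges s0 s1 v. traversals s0 s1 a (Suc n) e)
        = (\<Sum>e\<in>out_edges s0 s1 v. traversals s0 s1 a n e) + (if ?p = v then 1 else 0)"
    using edge by (simp add: traversals_Suc sum.distrib out_edges_def)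
  moreover have "(\<Sum>e\<in>in_edges s0 s1 v. traversals s0 s1 a (Suc n) e)
        = (\<Sum>e\<in>in_edges s0 s1 v. traversals s0 s1 a n e) + (if ?q = v then 1 else 0)"
    using edge by (simp add: traversals_Suc sum.distrib in_edges_def)
  ultimately show ?case
    using Suc.IH by (simp only: of_nat_add) (simp split: if_splits)
qed simp

lemma alternating_pair_sum_le:
  fixes y0 y1 c :: nat
  assumes "y1 \<le> y0" "y0 \<le> y1 + 1"
    and "if even c then y0 \<le> (c + 1) div 2 else y1 \<le> c div 2"
  shows "y0 + y1 \<le> c"
proof (cases "even c")
  case True
  then show ?thesis using assms by (auto elim!: evenE)
next
  case False
  then show ?thesis using assms by (auto elim!: oddE)
qed

lemma sum_out_edges_le_visits:
  assumes feasible: "switch_feasible s0 s1 a d x"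
    and saturated: "x (p, q) \<le> traversals s0 s1 a n (p, q)"
    and p: "p = run_pos s0 s1 a n" and q: "q = run_pos s0 s1 a (Suc n)"
  shows "(\<Sum>e\<in>out_edges s0 s1 p. x e) \<le> visits s0 s1 a n p"
proof -
  have next_edge: "q = (if even (visits s0 s1 a n p) then s0 p else s1 p)"
    unfolding p q by (rule run_pos_Suc)
  show ?thesis
  proof (cases "s0 p = s1 p")
    case True
    then have "q = s0 p" "out_edges s0 s1 p = {(p, s0 p)}"
      using next_edge by (simp_all add: out_edges_eq)
    then show ?thesis
      using True saturated traversals_out_edge_single[of s0 p s1 a n] by simp
  next
    case False
    let ?c = "visits s0 s1 a n p"
    have "x (p, s1 p) \<le> x (p, s0 p)" "x (p, s0 p) \<le> x (p, s1 p) + 1"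
      using feasible unfolding switch_feasible_def by auto
    moreover have "if even ?c then x (p, s0 p) \<le> (?c + 1) div 2 else x (p, s1 p) \<le> ?c div 2"
      using saturated next_edge traversals_out_edges_alternate[of s0 p s1 a n] False by auto
    ultimately have "x (p, s0 p) + x (p, s1 p) \<le> ?c"
      by (rule alternating_pair_sum_le)
    then show ?thesis
      using False by (simp add: out_edges_eq)
  qed
qed

lemma traversals_le_feasible:
  fixes s0 s1 :: "'v::finite \<Rightarrow> 'v"
  assumes feasible: "switch_feasible s0 s1 a d x"
    and avoids_d: "\<forall>i<n. run_pos s0 s1 a i \<noteq> d"
  shows "traversals s0 s1 a n e \<le> x e"
  using avoids_d
proof (induction n arbitrary: e)
  case (Suc n)
  define p where "p = run_pos s0 s1 a n"
  define q where "q = run_pos s0 s1 a (Suc n)"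
  have IH: "traversals s0 s1 a n e' \<le> x e'" for e'
    using Suc by auto
  have "traversals s0 s1 a n (p, q) < x (p, q)"
  proof (rule ccontr)
    assume "\<not> ?thesis"
    then have "(\<Sum>e\<in>out_edges s0 s1 p. x e) \<le> visits s0 s1 a n p"
      using sum_out_edges_le_visits[OF feasible _ p_def q_def] by simp
    moreover have "(\<Sum>e\<in>in_edges s0 s1 p. traversals s0 s1 a n e) \<le> (\<Sum>e\<in>in_edges s0 s1 p. x e)"
      using IH by (rule sum_mono)
    moreover have "p \<noteq> d"
      using Suc.prems p_def by auto
    then have "int (\<Sum>e\<in>out_edges s0 s1 p. x e) - int (\<Sum>e\<in>in_edges s0 s1 p. x e)
               = (if p = a then 1 else 0)"
      using feasible unfolding switch_feasible_def by auto
    moreover have "int (visits s0 s1 a n p) - int (\<Sum>e\<in>in_edges s0 s1 p. traversals s0 s1 a n e)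
                   = (if p = a then 1 else 0) - 1"
      using traversals_flow[where a=a and v=p and n=n]
      by (simp add: p_def sum_out_edges_traversals del: of_nat_sum)
    ultimately show False
      by (cases "p = a") (simp_all del: of_nat_sum)
  qed
  then show ?case
    using IH[of e] by (auto simp: traversals_Suc p_def[symmetric] q_def[symmetric])
qed simp

lemma run_pos_before_run_length:
  "i < run_length s0 s1 a d \<Longrightarrow> run_pos s0 s1 a i \<noteq> d"
  unfolding run_length_def by (rule not_less_Least)

lemma run_pos_run_length:
  "run_terminates s0 s1 a d \<Longrightarrow> run_pos s0 s1 a (run_length s0 s1 a d) = d"
  unfolding run_length_def run_terminates_def by (rule LeastI_ex)

lemma run_terminates_if_feasible:
  fixes s0 s1 :: "'v::finite \<Rightarrow> 'v"
  assumes feasible: "switch_feasible s0 s1 a d x"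
  shows "run_terminates s0 s1 a d"
proof (rule ccontr)
  let ?n = "Suc (total_flow s0 s1 x)"
  assume "\<not> run_terminates s0 s1 a d"
  then have "traversals s0 s1 a ?n e \<le> x e" for e
    using traversals_le_feasible[OF feasible] by (simp add: run_terminates_def)
  then have "(\<Sum>e\<in>sw_edges s0 s1. traversals s0 s1 a ?n e) \<le> total_flow s0 s1 x"
    unfolding total_flow_def by (rule sum_mono)
  then show False
    by (simp add: sum_traversals)
qed

lemma run_profile_le_feasible:
  fixes s0 s1 :: "'v::finite \<Rightarrow> 'v"
  assumes "switch_feasible s0 s1 a d x"
  shows "run_profile s0 s1 a d e \<le> x e"
proof -
  have "\<forall>i<run_length s0 s1 a d. run_pos s0 s1 a i \<noteq> d"
    by (auto dest: run_pos_before_run_length)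
  then show ?thesis
    unfolding run_profile_eq_traversals by (rule traversals_le_feasible[OF assms])
qed

lemma switch_feasible_run_profile:
  fixes s0 s1 :: "'v::finite \<Rightarrow> 'v"
  assumes terminates: "run_terminates s0 s1 a d" and "a \<noteq> d"
  shows "switch_feasible s0 s1 a d (run_profile s0 s1 a d)"
  unfolding switch_feasible_def run_profile_eq_traversals
proof (intro conjI allI impI)
  fix e
  assume "e \<notin> sw_edges s0 s1"
  then show "traversals s0 s1 a (run_length s0 s1 a d) e = 0"
    by (rule traversals_eq_0_if_not_edge)
next
  fix v
  show "int (\<Sum>e\<in>out_edges s0 s1 v. traversals s0 s1 a (run_length s0 s1 a d) e)
        - int (\<Sum>e\<in>in_edges s0 s1 v. traversals s0 s1 a (run_length s0 s1 a d) e)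
        = (if v = a then 1 else if v = d then - 1 else 0)"
    using traversals_flow[where a=a and v=v and n="run_length s0 s1 a d"]
      run_pos_run_length[OF terminates] \<open>a \<noteq> d\<close>
    by (auto simp del: of_nat_sum)
next
  fix v
  show "traversals s0 s1 a (run_length s0 s1 a d) (v, s1 v)
          \<le> traversals s0 s1 a (run_length s0 s1 a d) (v, s0 v)"
    by (rule traversals_switching[THEN conjunct1])
  show "traversals s0 s1 a (run_length s0 s1 a d) (v, s0 v)
          \<le> traversals s0 s1 a (run_length s0 s1 a d) (v, s1 v) + 1"
    by (rule traversals_switching[THEN conjunct2])
qed

lemma total_flow_less_if_dominates:
  fixes y x :: "'v \<times> 'v \<Rightarrow> nat"
  assumes "finite (sw_edges s0 s1)" and le: "\<And>e. y e \<le> x e"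
    and "\<forall>e. e \<notin> sw_edges s0 s1 \<longrightarrow> x e = 0" and "y \<noteq> x"
  shows "total_flow s0 s1 y < total_flow s0 s1 x"
proof -
  obtain e where "y e \<noteq> x e"
    using \<open>y \<noteq> x\<close> by blast
  moreover have "y e \<le> x e"
    by (rule le)
  ultimately have "e \<in> sw_edges s0 s1" "y e < x e"
    using assms(3) by (metis le_zero_eq, simp)
  then show ?thesis
    unfolding total_flow_def using assms(1) le by (meson sum_strict_mono_ex1)
qed

theorem theorem4:
  fixes s0 s1 :: "'v::finite \<Rightarrow> 'v" and a d :: 'v
  assumes "a \<noteq> d"
  shows "(run_terminates s0 s1 a d \<longleftrightarrow> (\<exists>x. switch_feasible s0 s1 a d x)) \<and>
         (run_terminates s0 s1 a d \<longrightarrow>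
            switch_feasible s0 s1 a d (run_profile s0 s1 a d) \<and>
            (\<forall>x. switch_feasible s0 s1 a d x \<and> x \<noteq> run_profile s0 s1 a d \<longrightarrow>
                 total_flow s0 s1 (run_profile s0 s1 a d) < total_flow s0 s1 x))"
proof (intro conjI impI allI iffI)
  show "run_terminates s0 s1 a d" if "\<exists>x. switch_feasible s0 s1 a d x"
    using that run_terminates_if_feasible by blast
  assume terminates: "run_terminates s0 s1 a d"
  show "switch_feasible s0 s1 a d (run_profile s0 s1 a d)"
    using switch_feasible_run_profile[OF terminates assms] .
  then show "\<exists>x. switch_feasible s0 s1 a d x" by blast
  fix x
  assume x: "switch_feasible s0 s1 a d x \<and> x \<noteq> run_profile s0 s1 a d"
  then have "\<forall>e. e \<notin> sw_edges s0 s1 \<longrightarrow> x e = 0"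
    by (simp add: switch_feasible_def)
  then show "total_flow s0 s1 (run_profile s0 s1 a d) < total_flow s0 s1 x"
    using x run_profile_le_feasible by (intro total_flow_less_if_dominates) auto
qed

end
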